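(* Let $n\geq2$, $m\geq1$ be integers, $\alpha,\beta\in\mathbb{C}$, $1\leq k\leq n/2$, and assume $|\beta-\alpha|>\cos\phi_k$. Then $$\big(\widetilde D_k\cap B_{\cos\phi_k}(0)\big)\cup\big(\widetilde E_k\cap R_{|\beta-\alpha|,k}\cap X\big)=B_{\cos\phi_k}(0)\cup\big(\widetilde E_k\cap R_{|\beta-\alpha|,k}\cap X\big),$$ where $X=\mathbb{C}$ if $k\leq m$ and $X=B_{\cos\psi_{k,m}}(0)$ if $k>m$. Moreover, each of the two lines $\{x+iy:\ x\cos\delta_k+y\sin\delta_k=|\beta-\alpha|\cos\delta_k\}$ and $\{x+iy:\ x\cos\delta_k-y\sin\delta_k=|\beta-\alpha|\cos\delta_k\}$ is tangent to the circle $x^2+y^2=\cos^2\phi_k$.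
   Context: $\phi_k=\frac{k\pi}{n+1}$, $\psi_{k,m}=\frac{(k-m)\pi}{n+1}$. $D_k=\{\theta\in\mathbb{R}:\ |\beta-\alpha|\cos\theta\leq\cos\phi_k\}$. $\delta_k=\arccos(\cos\phi_k/|\beta-\alpha|)\in[0,\pi]$ if $\beta\neq\alpha$ and $|\beta-\alpha|\geq|\cos\phi_k|$, and $\delta_k=0$ otherwise. $\widetilde D_k=\{\mu\in\mathbb{C}:\ \arg\mu\in D_k\}$ and $\widetilde E_k=\{\mu\in\mathbb{C}:\ \arg\mu\notin D_k\}$. $B_r(\lambda)$ is the closed disk of radius $r$ centered at $\lambda$. For $r\geq0$, $R_{r,k}=\{x+iy:\ x\leq r,\ (x-r)\cot\delta_k\leq y\leq(r-x)\cot\delta_k\}$. *)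

theory Defs
  imports "HOL-Analysis.Analysis"
begin

definition phi :: "nat \<Rightarrow> nat \<Rightarrow> real" where
  "phi n k = real k * pi / (real n + 1)"

definition psi :: "nat \<Rightarrow> nat \<Rightarrow> nat \<Rightarrow> real" where
  "psi n k m = (real k - real m) * pi / (real n + 1)"

(* delta_k, with d = |beta - alpha| *)
definition delta :: "nat \<Rightarrow> nat \<Rightarrow> real \<Rightarrow> real" where
  "delta n k d = (if d \<noteq> 0 \<and> d \<ge> \<bar>cos (phi n k)\<bar> then arccos (cos (phi n k) / d) else 0)"

definition Dset :: "nat \<Rightarrow> nat \<Rightarrow> real \<Rightarrow> real set" where
  "Dset n k d = {\<theta>. d * cos \<theta> \<le> cos (phi n k)}"

definition Dtilde :: "nat \<Rightarrow> nat \<Rightarrow> real \<Rightarrow> complex set" where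
  "Dtilde n k d = {\<mu>. Arg \<mu> \<in> Dset n k d}"

definition Etilde :: "nat \<Rightarrow> nat \<Rightarrow> real \<Rightarrow> complex set" where
  "Etilde n k d = {\<mu>. Arg \<mu> \<notin> Dset n k d}"

definition Rset :: "nat \<Rightarrow> nat \<Rightarrow> real \<Rightarrow> real \<Rightarrow> complex set" where
  "Rset n k d r = {z. Re z \<le> r \<and> (Re z - r) * cot (delta n k d) \<le> Im z
                      \<and> Im z \<le> (r - Re z) * cot (delta n k d)}"

definition tangent_to_circle :: "complex set \<Rightarrow> real \<Rightarrow> bool" where
  "tangent_to_circle L r \<longleftrightarrow> (\<exists>!z. z \<in> L \<and> (Re z)^2 + (Im z)^2 = r^2)"

end

theory Submission
  imports Defs
begin

(* The vertex of the wedge R_{d,k} is the point d, and cos delta_k = cos phi_k / d makes its two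
   edges exactly the tangents from d to the circle of radius cos phi_k; so the disk B_{cos phi_k}(0)
   lies in R_{d,k}.  It also lies in X, because 0 <= psi_{k,m} <= phi_k <= pi gives
   cos phi_k <= cos psi_{k,m}.  As D~_k and E~_k partition the plane, every point of the disk lies
   either in D~_k or in E~_k \<inter> R_{d,k} \<inter> X, which is the claimed set identity. *)

lemma Re_Im_combination_le_radius:
  fixes z :: complex and a b c :: real
  assumes "cmod z \<le> c" and "a\<^sup>2 + b\<^sup>2 = 1"
  shows "Re z * a + Im z * b \<le> c"
proof -
  have "Re z * a + Im z * b = inner z (Complex a b)"
    by (simp add: inner_complex_def)
  also have "\<dots> \<le> cmod z * cmod (Complex a b)"
    by (rule norm_cauchy_schwarz)
  also have "\<dots> = cmod z"
    using assms(2) by (simp add: complex_norm)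
  finally show ?thesis
    using assms(1) by linarith
qed

lemma tangent_to_circle_line:
  fixes a b c :: real
  assumes unit: "a\<^sup>2 + b\<^sup>2 = 1" and "0 < c"
  shows "tangent_to_circle {z. Re z * a + Im z * b = c} c"
  unfolding tangent_to_circle_def
proof (rule ex1I[of _ "c *\<^sub>R Complex a b"])
  have "Re (c *\<^sub>R Complex a b) * a + Im (c *\<^sub>R Complex a b) * b = c * (a\<^sup>2 + b\<^sup>2)"
    and "(Re (c *\<^sub>R Complex a b))\<^sup>2 + (Im (c *\<^sub>R Complex a b))\<^sup>2 = c\<^sup>2 * (a\<^sup>2 + b\<^sup>2)"
    by (simp_all add: power2_eq_square algebra_simps)
  then show "c *\<^sub>R Complex a b \<in> {z. Re z * a + Im z * b = c}
        \<and> (Re (c *\<^sub>R Complex a b))\<^sup>2 + (Im (c *\<^sub>R Complex a b))\<^sup>2 = c\<^sup>2"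
    using unit by simp
next
  fix z
  assume z: "z \<in> {z. Re z * a + Im z * b = c} \<and> (Re z)\<^sup>2 + (Im z)\<^sup>2 = c\<^sup>2"
  have norm_u: "cmod (Complex a b) = 1"
    using unit by (simp add: complex_norm)
  have norm_z: "cmod z = c"
    using z \<open>0 < c\<close> by (simp add: cmod_def)
  \<comment> \<open>equality in Cauchy-Schwarz forces z to be a positive multiple of the unit normal\<close>
  have "inner z (Complex a b) = cmod z * cmod (Complex a b)"
    using z norm_u norm_z by (simp add: inner_complex_def)
  then have "cmod z *\<^sub>R Complex a b = cmod (Complex a b) *\<^sub>R z"
    by (simp only: norm_cauchy_schwarz_eq)
  then show "z = c *\<^sub>R Complex a b"
    using norm_u norm_z by simp
qed

lemma cball_subset_wedge:
  fixes a b c d :: real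
  assumes unit: "a\<^sup>2 + b\<^sup>2 = 1" and "0 < b" and vertex: "d * a = c" and "c \<le> d"
  shows "cball 0 c \<subseteq> {z. Re z \<le> d \<and> (Re z - d) * (a / b) \<le> Im z \<and> Im z \<le> (d - Re z) * (a / b)}"
proof
  fix z :: complex
  assume "z \<in> cball 0 c"
  then have z: "cmod z \<le> c"
    by simp
  have "Re z \<le> d"
    using z complex_Re_le_cmod[of z] \<open>c \<le> d\<close> by linarith
  moreover have "Re z * a + Im z * b \<le> d * a"
    using Re_Im_combination_le_radius[OF z unit] vertex by simp
  moreover have "Re z * a + Im z * (- b) \<le> d * a"
    using Re_Im_combination_le_radius[OF z, of a "- b"] unit vertex by simp
  ultimately show "z \<in> {z. Re z \<le> d \<and> (Re z - d) * (a / b) \<le> Im z \<and> Im z \<le> (d - Re z) * (a / b)}"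
    using \<open>0 < b\<close> by (simp add: field_simps)
qed

lemma delta_eq_arccos:
  assumes "\<bar>cos (phi n k)\<bar> < d"
  shows "delta n k d = arccos (cos (phi n k) / d)"
  using assms unfolding delta_def by auto

lemma abs_cos_phi_div_less_one:
  assumes "\<bar>cos (phi n k)\<bar> < d"
  shows "\<bar>cos (phi n k) / d\<bar> < 1"
  using assms by (simp add: abs_divide)

lemma cos_delta:
  assumes "\<bar>cos (phi n k)\<bar> < d"
  shows "d * cos (delta n k d) = cos (phi n k)"
proof -
  have "cos (delta n k d) = cos (phi n k) / d"
    using abs_cos_phi_div_less_one[OF assms]
    by (simp add: delta_eq_arccos[OF assms] cos_arccos_abs)
  then show ?thesis
    using assms by simp
qed

lemma sin_delta_pos:
  assumes "\<bar>cos (phi n k)\<bar> < d"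
  shows "0 < sin (delta n k d)"
proof -
  have "0 < 1 - (cos (phi n k) / d)\<^sup>2"
    using abs_cos_phi_div_less_one[OF assms] by (simp add: abs_square_less_1)
  then show ?thesis
    using abs_cos_phi_div_less_one[OF assms]
    by (simp add: delta_eq_arccos[OF assms] sin_arccos_abs)
qed

lemma cball_subset_Rset:
  assumes "\<bar>cos (phi n k)\<bar> < d"
  shows "cball 0 (cos (phi n k)) \<subseteq> Rset n k d d"
  using cball_subset_wedge[of "cos (delta n k d)" "sin (delta n k d)" d "cos (phi n k)"]
    cos_delta[OF assms] sin_delta_pos[OF assms] assms
  by (simp add: Rset_def cot_def)

lemma cos_phi_pos:
  assumes "2 * k \<le> n"
  shows "0 < cos (phi n k)"
proof (rule cos_gt_zero_pi)
  have "real k * 2 < real n + 1"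
    using assms by linarith
  then have "real k * 2 * pi < (real n + 1) * pi"
    by (intro mult_strict_right_mono) auto
  then show "phi n k < pi / 2"
    unfolding phi_def by (simp add: field_simps)
  have "0 \<le> phi n k"
    unfolding phi_def by simp
  then show "- (pi / 2) < phi n k"
    using pi_gt_zero by linarith
qed

lemma cos_phi_le_cos_psi:
  assumes "m \<le> k" and "k \<le> n + 1"
  shows "cos (phi n k) \<le> cos (psi n k m)"
proof (rule cos_monotone_0_pi_le)
  show "0 \<le> psi n k m"
    using assms(1) unfolding psi_def by simp
  show "psi n k m \<le> phi n k"
    unfolding psi_def phi_def by (simp add: divide_right_mono)
  have "real k \<le> real n + 1"
    using assms(2) by linarith
  then have "real k * pi \<le> (real n + 1) * pi"
    by (intro mult_right_mono) auto
  then show "phi n k \<le> pi"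
    unfolding phi_def by (simp add: field_simps)
qed

theorem proposition3p4:
  fixes n m k :: nat and \<alpha> \<beta> :: complex
  assumes "n \<ge> 2" and "m \<ge> 1" and "1 \<le> k" and "2 * k \<le> n"
    and "cmod (\<beta> - \<alpha>) > cos (phi n k)"
  shows "(let d = cmod (\<beta> - \<alpha>);
              X = (if k \<le> m then UNIV else cball 0 (cos (psi n k m)))
          in (Dtilde n k d \<inter> cball 0 (cos (phi n k))) \<union> (Etilde n k d \<inter> Rset n k d d \<inter> X)
             = cball 0 (cos (phi n k)) \<union> (Etilde n k d \<inter> Rset n k d d \<inter> X)
           \<and> tangent_to_circle
               {z. Re z * cos (delta n k d) + Im z * sin (delta n k d) = d * cos (delta n k d)}
               (cos (phi n k))
           \<and> tangent_to_circle
               {z. Re z * cos (delta n k d) - Im z * sin (delta n k d) = d * cos (delta n k d)}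
               (cos (phi n k)))"
proof -
  define d where "d = cmod (\<beta> - \<alpha>)"
  define c where "c = cos (phi n k)"
  define X where "X = (if k \<le> m then UNIV else cball (0::complex) (cos (psi n k m)))"
  have "0 < c"
    unfolding c_def using assms(4) by (rule cos_phi_pos)
  with assms(5) have c_lt_d: "\<bar>cos (phi n k)\<bar> < d"
    unfolding c_def d_def by simp
  have "cball 0 c \<subseteq> X"
    using cos_phi_le_cos_psi[of m k n] assms(4) unfolding X_def c_def by auto
  with cball_subset_Rset[OF c_lt_d]
  have "(Dtilde n k d \<inter> cball 0 c) \<union> (Etilde n k d \<inter> Rset n k d d \<inter> X)
        = cball 0 c \<union> (Etilde n k d \<inter> Rset n k d d \<inter> X)"
    unfolding Dtilde_def Etilde_def c_def by blast
  moreover have "tangent_to_circle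
      {z. Re z * cos (delta n k d) + Im z * sin (delta n k d) = d * cos (delta n k d)} c"
    using tangent_to_circle_line[of "cos (delta n k d)" "sin (delta n k d)" c]
      \<open>0 < c\<close> cos_delta[OF c_lt_d] unfolding c_def by simp
  moreover have "tangent_to_circle
      {z. Re z * cos (delta n k d) - Im z * sin (delta n k d) = d * cos (delta n k d)} c"
    using tangent_to_circle_line[of "cos (delta n k d)" "- sin (delta n k d)" c]
      \<open>0 < c\<close> cos_delta[OF c_lt_d] unfolding c_def by simp
  ultimately show ?thesis
    unfolding Let_def d_def[symmetric] c_def[symmetric] X_def[symmetric] by blast
qed

end
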